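(* IW-PAV can fail to produce a committee satisfying weak-SW-JR: there exists an approval-based SCV instance in which a committee maximizing the IW-PAV score does not satisfy weak-SW-JR.
   Context: An approval-based sub-committee voting (SCV) instance consists of a set of voters $N=\{1,\ldots,n\}$, a finite set of candidates $C$ partitioned into candidate subsets $C_1,\ldots,C_\ell$, positive integer quotas $k_j\le |C_j|$ with $k=\sum_{j=1}^\ell k_j$, and approval ballots $A_i\subseteq C$ for $i\in N$. A committee is a set $W\subseteq C$ with $|W\cap C_j|=k_j$ for every $j$. Let $r(0)=0$ and $r(t)=\sum_{p=1}^t 1/p$ for $t\ge1$. The IW-PAV score of $W$ is $\sum_{j=1}^\ell\sum_{i\in N} r(|W\cap A_i\cap C_j|)$. $W$ satisfies weak-SW-JR if for every $X\subseteq N$ with $|X|\ge n/k$ and $|(\bigcap_{i\in X}A_i)\cap C_j|\ge 1$ for all $j=1,\ldots,\ell$ we have $|W\cap \bigcup_{i\in X}A_i|\ge 1$. *)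

theory Defs
  imports Main Complex_Main
begin

definition scv_candidates :: "nat \<Rightarrow> (nat \<Rightarrow> 'c set) \<Rightarrow> 'c set" where
  "scv_candidates l Cs = (\<Union>j\<in>{1..l}. Cs j)"

definition scv_instance ::
  "nat \<Rightarrow> nat \<Rightarrow> (nat \<Rightarrow> 'c set) \<Rightarrow> (nat \<Rightarrow> nat) \<Rightarrow> (nat \<Rightarrow> 'c set) \<Rightarrow> bool" where
  "scv_instance n l Cs q A \<longleftrightarrow>
     n \<ge> 1 \<and> l \<ge> 1 \<and>
     finite (scv_candidates l Cs) \<and>
     (\<forall>j\<in>{1..l}. \<forall>j'\<in>{1..l}. j \<noteq> j' \<longrightarrow> Cs j \<inter> Cs j' = {}) \<and>
     (\<forall>j\<in>{1..l}. 1 \<le> q j \<and> q j \<le> card (Cs j)) \<and>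
     (\<forall>i\<in>{1..n}. A i \<subseteq> scv_candidates l Cs)"

definition total_quota :: "nat \<Rightarrow> (nat \<Rightarrow> nat) \<Rightarrow> nat" where
  "total_quota l q = (\<Sum>j=1..l. q j)"

definition is_committee :: "nat \<Rightarrow> (nat \<Rightarrow> 'c set) \<Rightarrow> (nat \<Rightarrow> nat) \<Rightarrow> 'c set \<Rightarrow> bool" where
  "is_committee l Cs q W \<longleftrightarrow>
     W \<subseteq> scv_candidates l Cs \<and> (\<forall>j\<in>{1..l}. card (W \<inter> Cs j) = q j)"

definition pav_r :: "nat \<Rightarrow> real" where
  "pav_r t = (\<Sum>p=1..t. 1 / real p)"

definition iw_pav_score ::
  "nat \<Rightarrow> nat \<Rightarrow> (nat \<Rightarrow> 'c set) \<Rightarrow> (nat \<Rightarrow> 'c set) \<Rightarrow> 'c set \<Rightarrow> real" where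
  "iw_pav_score n l Cs A W = (\<Sum>j=1..l. \<Sum>i=1..n. pav_r (card (W \<inter> A i \<inter> Cs j)))"

definition weak_SW_JR ::
  "nat \<Rightarrow> nat \<Rightarrow> (nat \<Rightarrow> 'c set) \<Rightarrow> (nat \<Rightarrow> nat) \<Rightarrow> (nat \<Rightarrow> 'c set) \<Rightarrow> 'c set \<Rightarrow> bool" where
  "weak_SW_JR n l Cs q A W \<longleftrightarrow>
     (\<forall>X. X \<subseteq> {1..n} \<longrightarrow>
          real (card X) \<ge> real n / real (total_quota l q) \<longrightarrow>
          (\<forall>j\<in>{1..l}. card ((\<Inter>i\<in>X. A i) \<inter> Cs j) \<ge> 1) \<longrightarrow>
          card (W \<inter> (\<Union>i\<in>X. A i)) \<ge> 1)"

definition iw_pav_winner ::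
  "nat \<Rightarrow> nat \<Rightarrow> (nat \<Rightarrow> 'c set) \<Rightarrow> (nat \<Rightarrow> nat) \<Rightarrow> (nat \<Rightarrow> 'c set) \<Rightarrow> 'c set \<Rightarrow> bool" where
  "iw_pav_winner n l Cs q A W \<longleftrightarrow>
     is_committee l Cs q W \<and>
     (\<forall>W'. is_committee l Cs q W' \<longrightarrow> iw_pav_score n l Cs A W' \<le> iw_pav_score n l Cs A W)"

end

theory Submission
  imports Defs
begin

text \<open>Two voters, parts C1 = {1,3} and C2 = {2,4}, quota one each, ballots {1,2} and {3,4}.
  Since the ballots are disjoint, every committee has IW-PAV score at most k = 2, and the
  committee {3,4} attains it. Yet voter 1 alone is a group of size n/k = 1 approving a common
  candidate in each part, and {3,4} contains none of voter 1's candidates.\<close>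

lemma pav_r_le: "pav_r t \<le> real t"
proof -
  have "pav_r t \<le> (\<Sum>p=1..t. 1)"
    unfolding pav_r_def by (rule sum_mono) simp
  then show ?thesis by simp
qed

lemma pav_r_Suc_0 [simp]: "pav_r (Suc 0) = 1"
  by (simp add: pav_r_def)

lemma pav_r_0 [simp]: "pav_r 0 = 0"
  by (simp add: pav_r_def)

lemma iw_pav_score_le_total_quota:
  assumes W: "is_committee l Cs q W"
    and fin: "finite (scv_candidates l Cs)"
    and disj: "\<And>i i'. i \<in> {1..n} \<Longrightarrow> i' \<in> {1..n} \<Longrightarrow> i \<noteq> i' \<Longrightarrow> A i \<inter> A i' = {}"
  shows "iw_pav_score n l Cs A W \<le> real (total_quota l q)"
proof -
  have "(\<Sum>i=1..n. pav_r (card (W \<inter> A i \<inter> Cs j))) \<le> real (q j)" if j: "j \<in> {1..l}" for j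
  proof -
    have finW: "finite (W \<inter> Cs j)"
      using W fin by (auto simp: is_committee_def intro: finite_subset)
    have "(\<Sum>i=1..n. pav_r (card (W \<inter> A i \<inter> Cs j))) \<le> (\<Sum>i=1..n. real (card (W \<inter> A i \<inter> Cs j)))"
      by (rule sum_mono) (rule pav_r_le)
    also have "\<dots> = real (card (\<Union>i\<in>{1..n}. W \<inter> A i \<inter> Cs j))"
    proof (subst card_UN_disjoint)
      show "\<forall>i\<in>{1..n}. \<forall>i'\<in>{1..n}. i \<noteq> i' \<longrightarrow>
          (W \<inter> A i \<inter> Cs j) \<inter> (W \<inter> A i' \<inter> Cs j) = {}"
        using disj by blast
    qed (use finW in \<open>auto intro: finite_subset\<close>)
    also have "\<dots> \<le> real (card (W \<inter> Cs j))"
      using finW by (intro of_nat_mono card_mono) auto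
    also have "\<dots> = real (q j)"
      using W j by (simp add: is_committee_def)
    finally show ?thesis .
  qed
  then have "iw_pav_score n l Cs A W \<le> (\<Sum>j=1..l. real (q j))"
    unfolding iw_pav_score_def by (rule sum_mono)
  then show ?thesis
    by (simp add: total_quota_def)
qed

definition example_parts :: "nat \<Rightarrow> nat set" where
  "example_parts j = (if j = 1 then {1, 3} else {2, 4})"

definition example_ballots :: "nat \<Rightarrow> nat set" where
  "example_ballots i = (if i = 1 then {1, 2} else {3, 4})"

lemma atLeastAtMost_1_2: "{1..2::nat} = {1, 2}"
  by auto

lemma example_candidates: "scv_candidates 2 example_parts = {1, 2, 3, 4}"
  unfolding scv_candidates_def atLeastAtMost_1_2 by (auto simp: example_parts_def)

lemma example_instance: "scv_instance 2 2 example_parts (\<lambda>_. 1) example_ballots"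
  unfolding scv_instance_def example_candidates atLeastAtMost_1_2
  by (auto simp: example_parts_def example_ballots_def)

lemma example_winner: "iw_pav_winner 2 2 example_parts (\<lambda>_. 1) example_ballots {3, 4}"
proof -
  have committee: "is_committee 2 example_parts (\<lambda>_. 1) {3, 4}"
    by (auto simp: is_committee_def example_candidates atLeastAtMost_1_2 example_parts_def)
  have "iw_pav_score 2 2 example_parts example_ballots {3, 4} = 2"
    by (simp add: iw_pav_score_def numeral_2_eq_2 example_parts_def example_ballots_def
        Int_insert_left)
  moreover have "iw_pav_score 2 2 example_parts example_ballots W' \<le> 2"
    if "is_committee 2 example_parts (\<lambda>_. 1) W'" for W'
    using iw_pav_score_le_total_quota[OF that, of 2 example_ballots]
    by (simp add: example_candidates total_quota_def example_ballots_def)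
  ultimately show ?thesis
    using committee by (simp add: iw_pav_winner_def)
qed

lemma example_not_weak_SW_JR:
  "\<not> weak_SW_JR 2 2 example_parts (\<lambda>_. 1) example_ballots {3, 4}"
proof -
  have "card (example_ballots 1 \<inter> example_parts j) \<ge> 1" if "j \<in> {1..2}" for j
    using that by (auto simp: atLeastAtMost_1_2 example_ballots_def example_parts_def)
  moreover have "{3, 4} \<inter> example_ballots 1 = {}"
    by (simp add: example_ballots_def)
  ultimately show ?thesis
    unfolding weak_SW_JR_def total_quota_def by (intro notI) (drule spec[of _ "{1}"], auto)
qed

theorem mainTheorem13:
  shows "\<exists>(n::nat) (l::nat) (Cs::nat \<Rightarrow> nat set) (q::nat \<Rightarrow> nat) (A::nat \<Rightarrow> nat set) (W::nat set).
           scv_instance n l Cs q A \<and> iw_pav_winner n l Cs q A W \<and> \<not> weak_SW_JR n l Cs q A W"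
  using example_instance example_winner example_not_weak_SW_JR by blast

end
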